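(* Let $h$ be a smooth function on a neighborhood of $(0,0)$ whose Taylor expansion at $(0,0)$ is $h(x,y)=a^2x^2+b^2y^2+\sum_{m+n\ge3}h_{m,n}x^my^n$, where $a,b>0$ are linearly independent over $\mathbb{Q}$. Then there is a $C^\infty$ function $\tilde z$ such that $\tilde z_x^2+\tilde z_y^2-h$ vanishes to infinite order at $(0,0)$. *)

theory Defs
  imports "HOL-Analysis.Analysis"
begin

definition pdx :: "(real \<times> real \<Rightarrow> real) \<Rightarrow> real \<times> real \<Rightarrow> real" where
  "pdx f = (\<lambda>(x, y). deriv (\<lambda>t. f (t, y)) x)"

definition pdy :: "(real \<times> real \<Rightarrow> real) \<Rightarrow> real \<times> real \<Rightarrow> real" where
  "pdy f = (\<lambda>(x, y). deriv (\<lambda>t. f (x, t)) y)"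

text \<open>Iterated partial derivative: True means d/dx, False means d/dy;
  the list is applied from its last element to its first.\<close>

fun iter_pd :: "bool list \<Rightarrow> (real \<times> real \<Rightarrow> real) \<Rightarrow> real \<times> real \<Rightarrow> real" where
  "iter_pd [] f = f"
| "iter_pd (d # ds) f = (if d then pdx (iter_pd ds f) else pdy (iter_pd ds f))"

definition smooth_on :: "(real \<times> real) set \<Rightarrow> (real \<times> real \<Rightarrow> real) \<Rightarrow> bool" where
  "smooth_on U f \<longleftrightarrow> open U \<and>
     (\<forall>ds. continuous_on U (iter_pd ds f) \<and>
        (\<forall>x y. (x, y) \<in> U \<longrightarrow>
            (\<lambda>t. iter_pd ds f (t, y)) differentiable (at x) \<and>
            (\<lambda>t. iter_pd ds f (x, t)) differentiable (at y)))"

definition vanishes_to_infinite_order_at :: "(real \<times> real \<Rightarrow> real) \<Rightarrow> real \<times> real \<Rightarrow> bool" where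
  "vanishes_to_infinite_order_at g p \<longleftrightarrow> (\<forall>ds. iter_pd ds g p = 0)"

end

theory Submission
  imports Defs "HOL-Computational_Algebra.Polynomial" "HOL-Library.Nat_Bijection"
begin

text \<open>
  Let \<open>c\<^sub>m\<^sub>n = \<partial>\<^sub>x\<^sup>m \<partial>\<^sub>y\<^sup>n z(0)\<close> be the jet of the sought function \<open>z\<close>, with quadratic part
  \<open>c\<^sub>2\<^sub>0 = a\<close>, \<open>c\<^sub>0\<^sub>2 = b\<close> and all other coefficients of order \<open>\<le> 2\<close> zero. By the Leibniz rule, the
  derivative of order \<open>(m, n)\<close> of \<open>z\<^sub>x\<^sup>2 + z\<^sub>y\<^sup>2\<close> at 0 is, for \<open>m + n \<ge> 3\<close>, equal to
  \<open>2 (m a + n b) c\<^sub>m\<^sub>n\<close> plus a polynomial in the coefficients of orders between 3 and \<open>m + n - 1\<close>.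
  As \<open>a, b > 0\<close>, the factor \<open>m a + n b\<close> never vanishes, so the jet can be solved for order by
  order so as to match the jet of \<open>h\<close>. Borel's lemma then realises this jet by a smooth function:
  a series of terms \<open>c\<^sub>m\<^sub>n/(m! n!) \<rho>\<^sub>m(x) \<rho>\<^sub>n(y)\<close> with cut-off monomials \<open>\<rho>\<^sub>m(u) = u\<^sup>m \<chi>(u)\<close>, each
  term rescaled so strongly that all derivative series converge uniformly.
\<close>

section \<open>Smooth functions of one real variable\<close>

fun differentiable_n_times :: "nat \<Rightarrow> (real \<Rightarrow> real) \<Rightarrow> bool" where
  "differentiable_n_times 0 f \<longleftrightarrow> True"
| "differentiable_n_times (Suc k) f \<longleftrightarrow>
     (\<forall>x. f differentiable (at x)) \<and> differentiable_n_times k (deriv f)"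

definition smooth :: "(real \<Rightarrow> real) \<Rightarrow> bool" where
  "smooth f \<longleftrightarrow> (\<forall>k. differentiable_n_times k f)"

lemma deriv_has_real_derivative:
  "f differentiable (at x) \<Longrightarrow> (f has_real_derivative deriv f x) (at x)"
  by (simp add: DERIV_deriv_iff_real_differentiable)

lemma differentiable_n_times_SucD: "differentiable_n_times (Suc k) f \<Longrightarrow> differentiable_n_times k f"
  by (induction k arbitrary: f) auto

lemma differentiable_n_times_const: "differentiable_n_times k (\<lambda>x. c)"
  by (induction k arbitrary: c) auto

lemma differentiable_n_times_ident: "differentiable_n_times k (\<lambda>x. x)"
  by (cases k) (auto simp: differentiable_n_times_const)

lemma differentiable_n_times_add:
  "differentiable_n_times k f \<Longrightarrow> differentiable_n_times k g \<Longrightarrow>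
    differentiable_n_times k (\<lambda>x. f x + g x)"
proof (induction k arbitrary: f g)
  case (Suc k)
  have "deriv (\<lambda>x. f x + g x) = (\<lambda>x. deriv f x + deriv g x)"
    using Suc.prems by (intro ext DERIV_imp_deriv DERIV_add deriv_has_real_derivative) auto
  with Suc show ?case by auto
qed auto

lemma differentiable_n_times_mult:
  "differentiable_n_times k f \<Longrightarrow> differentiable_n_times k g \<Longrightarrow>
    differentiable_n_times k (\<lambda>x. f x * g x)"
proof (induction k arbitrary: f g)
  case (Suc k)
  have "deriv (\<lambda>x. f x * g x) = (\<lambda>x. f x * deriv g x + deriv f x * g x)"
    using Suc.prems by (intro ext DERIV_imp_deriv DERIV_mult' deriv_has_real_derivative) auto
  moreover have "differentiable_n_times k (\<lambda>x. f x * deriv g x + deriv f x * g x)"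
    using Suc differentiable_n_times_SucD by (intro differentiable_n_times_add) auto
  ultimately show ?case using Suc.prems by auto
qed auto

lemma smooth_deriv: "smooth f \<Longrightarrow> smooth (deriv f)"
  unfolding smooth_def using differentiable_n_times.simps(2) by blast

lemma smooth_differentiable: "smooth f \<Longrightarrow> f differentiable (at x)"
  unfolding smooth_def using differentiable_n_times.simps(2) by blast

lemma smooth_const: "smooth (\<lambda>x. c)"
  by (simp add: smooth_def differentiable_n_times_const)

lemma smooth_ident: "smooth (\<lambda>x. x)"
  by (simp add: smooth_def differentiable_n_times_ident)

lemma smooth_add: "smooth f \<Longrightarrow> smooth g \<Longrightarrow> smooth (\<lambda>x. f x + g x)"
  by (simp add: smooth_def differentiable_n_times_add)

lemma smooth_mult: "smooth f \<Longrightarrow> smooth g \<Longrightarrow> smooth (\<lambda>x. f x * g x)"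
  by (simp add: smooth_def differentiable_n_times_mult)

lemma smooth_diff: "smooth f \<Longrightarrow> smooth g \<Longrightarrow> smooth (\<lambda>x. f x - g x)"
  using smooth_add[of f "\<lambda>x. - 1 * g x"] smooth_mult[OF smooth_const, of g "- 1"] by simp

lemma smooth_power: "smooth f \<Longrightarrow> smooth (\<lambda>x. f x ^ n)"
  by (induction n) (auto intro: smooth_mult smooth_const)

lemma differentiable_n_times_compose:
  "smooth f \<Longrightarrow> smooth g \<Longrightarrow> differentiable_n_times k (\<lambda>x. f (g x))"
proof (induction k arbitrary: f)
  case (Suc k)
  have "deriv (\<lambda>x. f (g x)) = (\<lambda>x. deriv f (g x) * deriv g x)"
    using Suc.prems
    by (intro ext DERIV_imp_deriv DERIV_chain2[of f] deriv_has_real_derivative smooth_differentiable)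
  moreover have "differentiable_n_times k (\<lambda>x. deriv f (g x) * deriv g x)"
    using Suc smooth_deriv smooth_def by (intro differentiable_n_times_mult) auto
  moreover have "(\<lambda>x. f (g x)) differentiable (at x)" for x
    using Suc.prems DERIV_chain2[OF deriv_has_real_derivative deriv_has_real_derivative]
      smooth_differentiable real_differentiable_def by blast
  ultimately show ?case by simp
qed auto

lemma smooth_compose: "smooth f \<Longrightarrow> smooth g \<Longrightarrow> smooth (\<lambda>x. f (g x))"
  by (simp add: smooth_def differentiable_n_times_compose)

lemma differentiable_n_times_inverse:
  "smooth f \<Longrightarrow> (\<And>x. f x \<noteq> 0) \<Longrightarrow> differentiable_n_times k (\<lambda>x. inverse (f x))"
proof (induction k)
  case (Suc k)
  have "deriv (\<lambda>x. inverse (f x)) = (\<lambda>x. - (inverse (f x) * deriv f x * inverse (f x)))"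
    using Suc.prems
    by (intro ext DERIV_imp_deriv DERIV_inverse' deriv_has_real_derivative smooth_differentiable)
  moreover have "differentiable_n_times k (\<lambda>x. (- 1) * (inverse (f x) * deriv f x * inverse (f x)))"
    using Suc smooth_deriv smooth_def
    by (intro differentiable_n_times_mult differentiable_n_times_const) auto
  moreover have "(\<lambda>x. inverse (f x)) differentiable (at x)" for x
    using Suc.prems DERIV_inverse'[OF deriv_has_real_derivative] smooth_differentiable
      real_differentiable_def by blast
  ultimately show ?case by simp
qed auto

lemma smooth_inverse: "smooth f \<Longrightarrow> (\<And>x. f x \<noteq> 0) \<Longrightarrow> smooth (\<lambda>x. inverse (f x))"
  by (simp add: smooth_def differentiable_n_times_inverse)

lemma smooth_higher_deriv: "smooth f \<Longrightarrow> smooth ((deriv ^^ j) f)"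
  by (induction j) (auto intro: smooth_deriv)

lemma smooth_higher_deriv_differentiable: "smooth f \<Longrightarrow> (deriv ^^ j) f differentiable (at x)"
  using smooth_higher_deriv smooth_differentiable by blast

lemma smooth_continuous_on_higher_deriv: "smooth f \<Longrightarrow> continuous_on S ((deriv ^^ j) f)"
  by (meson continuous_at_imp_continuous_on differentiable_imp_continuous_within
      smooth_higher_deriv_differentiable)

lemma higher_deriv_power:
  "(deriv ^^ p) (\<lambda>u::real. u ^ m) =
    (\<lambda>u. if p \<le> m then fact m / fact (m - p) * u ^ (m - p) else 0)"
proof (induction p)
  case (Suc p)
  show ?case
  proof (cases "p < m")
    case True
    have fact: "(fact (m - p) :: real) = real (m - p) * fact (m - Suc p)"
      using True by (metis Suc_diff_Suc fact_Suc of_nat_fact)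
    have "(deriv ^^ Suc p) (\<lambda>u::real. u ^ m) = deriv (\<lambda>u. fact m / fact (m - p) * u ^ (m - p))"
      using Suc True by simp
    also have "\<dots> = (\<lambda>u. fact m / fact (m - p) * (real (m - p) * u ^ (m - p - Suc 0)))"
      by (intro ext DERIV_imp_deriv DERIV_cmult DERIV_pow)
    also have "\<dots> = (\<lambda>u. fact m / fact (m - Suc p) * u ^ (m - Suc p))"
      using True by (simp add: fact)
    finally show ?thesis using True by simp
  next
    case False
    then have "(deriv ^^ p) (\<lambda>u::real. u ^ m) = (\<lambda>u. if p = m then fact m else 0)"
      using Suc.IH by (auto simp: fun_eq_iff)
    moreover have "deriv (\<lambda>u::real. if p = m then fact m else 0) = (\<lambda>u. 0)"
      by (intro ext DERIV_imp_deriv DERIV_const)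
    ultimately show ?thesis using False by simp
  qed
qed simp

section \<open>A flat function and cut-off monomials\<close>

definition flat_exp :: "real poly \<Rightarrow> real \<Rightarrow> real" where
  "flat_exp Q t = (if t > 0 then poly Q (inverse t) * exp (- inverse t) else 0)"

text \<open>For \<open>t > 0\<close> and \<open>s = 1/t\<close>: \<open>d/dt (Q(s) e\<^sup>-\<^sup>s) = s\<^sup>2 (Q - Q')(s) e\<^sup>-\<^sup>s\<close>.\<close>

definition flat_exp_deriv_poly :: "real poly \<Rightarrow> real poly" where
  "flat_exp_deriv_poly Q = [:0, 0, 1:] * (Q - pderiv Q)"

lemma tendsto_poly_inverse_exp_0:
  "((\<lambda>t. poly Q (inverse t) * exp (- inverse t)) \<longlongrightarrow> 0) (at_right (0::real))"
proof -
  have eq: "poly Q s * exp (- s) = (\<Sum>i\<le>degree Q. coeff Q i * (s ^ i / exp s))" for s :: real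
    by (simp add: poly_altdef sum_distrib_right exp_minus divide_inverse mult.assoc)
  have "((\<lambda>s. \<Sum>i\<le>degree Q. coeff Q i * (s ^ i / exp s)) \<longlongrightarrow> (\<Sum>i\<le>degree Q. coeff Q i * 0)) at_top"
    by (intro tendsto_sum tendsto_mult tendsto_const tendsto_power_div_exp_0)
  then have "((\<lambda>s. poly Q s * exp (- s)) \<longlongrightarrow> 0) at_top" by (simp add: eq)
  from filterlim_compose[OF this filterlim_inverse_at_top_right] show ?thesis by (simp add: o_def)
qed

lemma flat_exp_has_deriv_pos:
  assumes "t > 0"
  shows "(flat_exp Q has_real_derivative flat_exp (flat_exp_deriv_poly Q) t) (at t)"
proof -
  have d1: "((\<lambda>t. poly Q (inverse t)) has_real_derivative
      poly (pderiv Q) (inverse t) * (- (inverse t ^ Suc (Suc 0)))) (at t)"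
    by (rule DERIV_chain2[OF poly_DERIV DERIV_inverse]) (use assms in auto)
  have d2: "((\<lambda>t. exp (- inverse t)) has_real_derivative
      exp (- inverse t) * (- (- (inverse t ^ Suc (Suc 0))))) (at t)"
    by (rule DERIV_chain2[OF DERIV_exp DERIV_minus[OF DERIV_inverse]]) (use assms in auto)
  have d3: "((\<lambda>t. poly Q (inverse t) * exp (- inverse t)) has_real_derivative
      flat_exp (flat_exp_deriv_poly Q) t) (at t)"
    using DERIV_mult'[OF d1 d2] assms
    by (simp add: flat_exp_def flat_exp_deriv_poly_def poly_diff algebra_simps power2_eq_square)
  have "eventually (\<lambda>x. flat_exp Q x = poly Q (inverse x) * exp (- inverse x)) (nhds t)"
    using eventually_nhds_in_open[of "{0<..}" t] assms
    by (auto simp: flat_exp_def elim!: eventually_mono)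
  from DERIV_cong_ev[OF refl this refl] d3 show ?thesis by blast
qed

lemma flat_exp_has_deriv_0: "(flat_exp Q has_real_derivative 0) (at 0)"
proof -
  let ?q = "\<lambda>y. (flat_exp Q y - flat_exp Q 0) / (y - 0)"
  have "eventually (\<lambda>y. ?q y = 0) (at_left (0::real))"
    using eventually_at_left_real[of "-1" 0] by (auto simp: flat_exp_def elim!: eventually_mono)
  then have left: "(?q \<longlongrightarrow> 0) (at_left 0)" by (rule tendsto_eventually)
  have "eventually (\<lambda>y. poly ([:0, 1:] * Q) (inverse y) * exp (- inverse y) = ?q y) (at_right (0::real))"
    using eventually_at_right_real[of 0 1]
    by (auto simp: flat_exp_def divide_inverse elim!: eventually_mono)
  from tendsto_cong[OF this] have right: "(?q \<longlongrightarrow> 0) (at_right 0)"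
    using tendsto_poly_inverse_exp_0 by blast
  have "(?q \<longlongrightarrow> 0) (at 0)" by (rule filterlim_split_at[OF left right])
  then show ?thesis by (simp add: has_field_derivative_iff)
qed

lemma flat_exp_has_deriv: "(flat_exp Q has_real_derivative flat_exp (flat_exp_deriv_poly Q) t) (at t)"
proof (cases t "0::real" rule: linorder_cases)
  case less
  have "eventually (\<lambda>x. flat_exp Q x = 0) (nhds t)"
    using eventually_nhds_in_open[of "{..<0}" t] less
    by (auto simp: flat_exp_def elim!: eventually_mono)
  then have "(flat_exp Q has_real_derivative 0) (at t) \<longleftrightarrow> ((\<lambda>x. 0) has_real_derivative 0) (at t)"
    by (rule DERIV_cong_ev[OF refl _ refl])
  then have "(flat_exp Q has_real_derivative 0) (at t)" by simp
  then show ?thesis using less by (simp add: flat_exp_def)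
next
  case equal
  then show ?thesis using flat_exp_has_deriv_0 by (simp add: flat_exp_def)
qed (rule flat_exp_has_deriv_pos)

lemma smooth_flat_exp: "smooth (flat_exp Q)"
proof -
  have "differentiable_n_times k (flat_exp Q)" for k
  proof (induction k arbitrary: Q)
    case (Suc k)
    have "deriv (flat_exp Q) = flat_exp (flat_exp_deriv_poly Q)"
      by (intro ext DERIV_imp_deriv flat_exp_has_deriv)
    then show ?case using Suc flat_exp_has_deriv real_differentiable_def by auto
  qed simp
  then show ?thesis by (simp add: smooth_def)
qed

lemma flat_exp_1_nonneg: "0 \<le> flat_exp 1 t"
  by (simp add: flat_exp_def)

lemma flat_exp_1_pos: "0 < t \<Longrightarrow> 0 < flat_exp 1 t"
  by (simp add: flat_exp_def)

definition bump :: "real \<Rightarrow> real" where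
  "bump u = flat_exp 1 (4 - u\<^sup>2) / (flat_exp 1 (4 - u\<^sup>2) + flat_exp 1 (u\<^sup>2 - 1))"

lemma smooth_bump: "smooth bump"
proof -
  have pos: "flat_exp 1 (4 - u\<^sup>2) + flat_exp 1 (u\<^sup>2 - 1) \<noteq> 0" for u
    using flat_exp_1_pos[of "4 - u\<^sup>2"] flat_exp_1_pos[of "u\<^sup>2 - 1"]
      flat_exp_1_nonneg[of "4 - u\<^sup>2"] flat_exp_1_nonneg[of "u\<^sup>2 - 1"]
    by (cases "u\<^sup>2 < 4") auto
  have "smooth (\<lambda>u. flat_exp 1 (4 - u\<^sup>2) * inverse (flat_exp 1 (4 - u\<^sup>2) + flat_exp 1 (u\<^sup>2 - 1)))"
    by (intro smooth_mult smooth_inverse smooth_add smooth_compose[OF smooth_flat_exp]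
        smooth_diff smooth_power smooth_const smooth_ident pos)
  then show ?thesis by (simp add: bump_def[abs_def] divide_inverse)
qed

lemma bump_eq_1: "\<bar>u\<bar> < 1 \<Longrightarrow> bump u = 1"
  by (simp add: bump_def flat_exp_def abs_square_less_1[symmetric])

lemma bump_eq_0: "2 \<le> \<bar>u\<bar> \<Longrightarrow> bump u = 0"
  using power_mono[of 2 "\<bar>u\<bar>" 2] by (simp add: bump_def flat_exp_def)

definition bump_monom :: "nat \<Rightarrow> real \<Rightarrow> real" where
  "bump_monom m u = u ^ m * bump u"

lemma smooth_bump_monom: "smooth (bump_monom m)"
  unfolding bump_monom_def[abs_def] by (intro smooth_mult smooth_power smooth_ident smooth_bump)

lemma higher_deriv_bump_monom_outside: "2 < \<bar>u\<bar> \<Longrightarrow> (deriv ^^ p) (bump_monom m) u = 0"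
proof -
  assume u: "2 < \<bar>u\<bar>"
  have "open {x::real. 2 < \<bar>x\<bar>}" by (intro open_Collect_less continuous_intros)
  from eventually_nhds_in_open[OF this, of u] have "eventually (\<lambda>x. bump_monom m x = 0) (nhds u)"
    using u by (auto simp: bump_monom_def bump_eq_0 elim!: eventually_mono)
  then have "(deriv ^^ p) (bump_monom m) u = (deriv ^^ p) (\<lambda>x. 0) u"
    by (rule higher_deriv_cong_ev) simp
  also have "(deriv ^^ p) (\<lambda>x. 0::real) = (\<lambda>x. 0)" by (induction p) auto
  finally show ?thesis by simp
qed

lemma bounded_higher_deriv_bump_monom: "\<exists>B. \<forall>u. \<bar>(deriv ^^ p) (bump_monom m) u\<bar> \<le> B"
proof -
  let ?F = "(deriv ^^ p) (bump_monom m)"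
  have "bounded (?F ` cball 0 2)"
    by (intro compact_imp_bounded compact_continuous_image smooth_continuous_on_higher_deriv
        smooth_bump_monom compact_cball)
  then obtain B where B: "\<forall>x\<in>cball 0 2. \<bar>?F x\<bar> \<le> B"
    unfolding bounded_real by auto
  have "\<bar>?F u\<bar> \<le> B" for u
    using B[rule_format, of 0] B[rule_format, of u] higher_deriv_bump_monom_outside[of u]
    by (cases "2 < \<bar>u\<bar>") auto
  then show ?thesis by blast
qed

lemma higher_deriv_bump_monom_0: "(deriv ^^ p) (bump_monom m) 0 = (if p = m then fact m else 0)"
proof -
  have "open {x::real. \<bar>x\<bar> < 1}" by (intro open_Collect_less continuous_intros)
  from eventually_nhds_in_open[OF this, of 0] have "eventually (\<lambda>x. bump_monom m x = x ^ m) (nhds 0)"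
    by (auto simp: bump_monom_def bump_eq_1 elim!: eventually_mono)
  then have "(deriv ^^ p) (bump_monom m) 0 = (deriv ^^ p) (\<lambda>x. x ^ m) 0"
    by (rule higher_deriv_cong_ev) simp
  then show ?thesis by (simp add: higher_deriv_power)
qed

definition bump_bound :: "nat \<Rightarrow> nat \<Rightarrow> real" where
  "bump_bound m p = (SOME B. \<forall>u. \<bar>(deriv ^^ p) (bump_monom m) u\<bar> \<le> B)"

lemma higher_deriv_bump_monom_le: "\<bar>(deriv ^^ p) (bump_monom m) u\<bar> \<le> bump_bound m p"
  using someI_ex[OF bounded_higher_deriv_bump_monom] unfolding bump_bound_def by blast

lemma bump_bound_nonneg: "0 \<le> bump_bound m p"
  using higher_deriv_bump_monom_le[of p m 0] by linarith

section \<open>Partial derivatives of smooth functions of two variables\<close>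

lemma iter_pd_append: "iter_pd ds (iter_pd es f) = iter_pd (ds @ es) f"
  by (induction ds) auto

lemma smooth_on_open: "smooth_on U f \<Longrightarrow> open U"
  unfolding smooth_on_def by blast

lemma smooth_on_continuous_on: "smooth_on U f \<Longrightarrow> continuous_on U f"
  unfolding smooth_on_def by (metis iter_pd.simps(1))

lemma smooth_on_iter_pd: "smooth_on U f \<Longrightarrow> smooth_on U (iter_pd ds f)"
  unfolding smooth_on_def iter_pd_append by blast

lemma smooth_on_pdx: "smooth_on U f \<Longrightarrow> smooth_on U (pdx f)"
  using smooth_on_iter_pd[of U f "[True]"] by simp

lemma smooth_on_pdy: "smooth_on U f \<Longrightarrow> smooth_on U (pdy f)"
  using smooth_on_iter_pd[of U f "[False]"] by simp

lemma smooth_on_subset: "smooth_on U f \<Longrightarrow> open V \<Longrightarrow> V \<subseteq> U \<Longrightarrow> smooth_on V f"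
  unfolding smooth_on_def by (meson continuous_on_subset subsetD)

lemma smooth_on_has_pdx:
  assumes "smooth_on U f" "(x, y) \<in> U"
  shows "((\<lambda>t. f (t, y)) has_real_derivative pdx f (x, y)) (at x)"
proof -
  have "(\<lambda>t. iter_pd [] f (t, y)) differentiable (at x)"
    using assms unfolding smooth_on_def by blast
  then show ?thesis by (simp add: pdx_def deriv_has_real_derivative)
qed

lemma smooth_on_has_pdy:
  assumes "smooth_on U f" "(x, y) \<in> U"
  shows "((\<lambda>t. f (x, t)) has_real_derivative pdy f (x, y)) (at y)"
proof -
  have "(\<lambda>t. iter_pd [] f (x, t)) differentiable (at y)"
    using assms unfolding smooth_on_def by blast
  then show ?thesis by (simp add: pdy_def deriv_has_real_derivative)
qed

lemma eventually_horizontal_in_open: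
  fixes U :: "(real \<times> real) set"
  assumes "open U" "(x, y) \<in> U"
  shows "eventually (\<lambda>t. (t, y) \<in> U) (nhds x)"
  using topological_tendstoD[OF tendsto_Pair[OF filterlim_ident tendsto_const] assms] .

lemma eventually_vertical_in_open:
  fixes U :: "(real \<times> real) set"
  assumes "open U" "(x, y) \<in> U"
  shows "eventually (\<lambda>t. (x, t) \<in> U) (nhds y)"
  using topological_tendstoD[OF tendsto_Pair[OF tendsto_const filterlim_ident] assms] .

lemma pdx_cong_on:
  assumes "open U" "\<And>q. q \<in> U \<Longrightarrow> f q = g q" "p \<in> U"
  shows "pdx f p = pdx g p"
proof -
  obtain x y where p: "p = (x, y)" by (cases p)
  have "eventually (\<lambda>t. f (t, y) = g (t, y)) (nhds x)"
    using eventually_horizontal_in_open[OF assms(1) assms(3)[unfolded p]] assms(2)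
    by (auto elim!: eventually_mono)
  then show ?thesis unfolding p pdx_def by (simp add: deriv_cong_ev)
qed

lemma pdy_cong_on:
  assumes "open U" "\<And>q. q \<in> U \<Longrightarrow> f q = g q" "p \<in> U"
  shows "pdy f p = pdy g p"
proof -
  obtain x y where p: "p = (x, y)" by (cases p)
  have "eventually (\<lambda>t. f (x, t) = g (x, t)) (nhds y)"
    using eventually_vertical_in_open[OF assms(1) assms(3)[unfolded p]] assms(2)
    by (auto elim!: eventually_mono)
  then show ?thesis unfolding p pdy_def by (simp add: deriv_cong_ev)
qed

lemma pdx_add_scaled:
  assumes "smooth_on U f" "smooth_on U g" "p \<in> U"
  shows "pdx (\<lambda>q. f q + r * g q) p = pdx f p + r * pdx g p"
proof -
  obtain x y where p: "p = (x, y)" by (cases p)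
  have "((\<lambda>t. f (t, y) + r * g (t, y)) has_real_derivative pdx f (x, y) + r * pdx g (x, y)) (at x)"
    using assms unfolding p by (intro DERIV_add DERIV_cmult smooth_on_has_pdx)
  then show ?thesis unfolding p by (simp add: pdx_def DERIV_imp_deriv)
qed

lemma pdy_add_scaled:
  assumes "smooth_on U f" "smooth_on U g" "p \<in> U"
  shows "pdy (\<lambda>q. f q + r * g q) p = pdy f p + r * pdy g p"
proof -
  obtain x y where p: "p = (x, y)" by (cases p)
  have "((\<lambda>t. f (x, t) + r * g (x, t)) has_real_derivative pdy f (x, y) + r * pdy g (x, y)) (at y)"
    using assms unfolding p by (intro DERIV_add DERIV_cmult smooth_on_has_pdy)
  then show ?thesis unfolding p by (simp add: pdy_def DERIV_imp_deriv)
qed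

lemma iter_pd_add_scaled:
  assumes f: "smooth_on U f" and g: "smooth_on U g"
  shows "p \<in> U \<Longrightarrow> iter_pd ds (\<lambda>q. f q + r * g q) p = iter_pd ds f p + r * iter_pd ds g p"
proof (induction ds arbitrary: p)
  case (Cons d ds)
  have U: "open U" using f smooth_on_open by blast
  have fd: "smooth_on U (iter_pd ds f)" and gd: "smooth_on U (iter_pd ds g)"
    using f g smooth_on_iter_pd by auto
  show ?case
  proof (cases d)
    case True
    have "iter_pd (d # ds) (\<lambda>q. f q + r * g q) p = pdx (\<lambda>q. iter_pd ds f q + r * iter_pd ds g q) p"
      using True pdx_cong_on[OF U Cons.IH Cons.prems] by simp
    then show ?thesis using True pdx_add_scaled[OF fd gd Cons.prems] by simp
  next
    case False
    have "iter_pd (d # ds) (\<lambda>q. f q + r * g q) p = pdy (\<lambda>q. iter_pd ds f q + r * iter_pd ds g q) p"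
      using False pdy_cong_on[OF U Cons.IH Cons.prems] by simp
    then show ?thesis using False pdy_add_scaled[OF fd gd Cons.prems] by simp
  qed
qed simp

lemma iter_pd_add:
  "smooth_on U f \<Longrightarrow> smooth_on U g \<Longrightarrow> p \<in> U \<Longrightarrow>
    iter_pd ds (\<lambda>q. f q + g q) p = iter_pd ds f p + iter_pd ds g p"
  using iter_pd_add_scaled[of U f g p ds 1] by simp

lemma iter_pd_diff:
  "smooth_on U f \<Longrightarrow> smooth_on U g \<Longrightarrow> p \<in> U \<Longrightarrow>
    iter_pd ds (\<lambda>q. f q - g q) p = iter_pd ds f p - iter_pd ds g p"
  using iter_pd_add_scaled[of U f g p ds "- 1"] by simp

lemma smooth_onI_local:
  assumes U: "open U"
    and F: "\<And>ds. \<exists>F. (\<forall>p\<in>U. iter_pd ds f p = F p) \<and> continuous_on U F \<and>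
        (\<forall>x y. (x, y) \<in> U \<longrightarrow> (\<lambda>t. F (t, y)) differentiable (at x) \<and> (\<lambda>t. F (x, t)) differentiable (at y))"
  shows "smooth_on U f"
  unfolding smooth_on_def
proof (intro conjI allI impI U)
  fix ds
  obtain G where G: "\<forall>p\<in>U. iter_pd ds f p = G p" "continuous_on U G"
    "\<forall>x y. (x, y) \<in> U \<longrightarrow> (\<lambda>t. G (t, y)) differentiable (at x) \<and> (\<lambda>t. G (x, t)) differentiable (at y)"
    using F by blast
  show "continuous_on U (iter_pd ds f)" by (rule continuous_on_eq[OF G(2)]) (use G(1) in auto)
  fix x y assume p: "(x, y) \<in> U"
  obtain Dx where Dx: "((\<lambda>t. G (t, y)) has_real_derivative Dx) (at x)"
    using G(3) p real_differentiable_def by blast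
  have "eventually (\<lambda>t. iter_pd ds f (t, y) = G (t, y)) (nhds x)"
    using eventually_horizontal_in_open[OF U p] G(1) by (auto elim!: eventually_mono)
  from DERIV_cong_ev[OF refl this refl] Dx show "(\<lambda>t. iter_pd ds f (t, y)) differentiable (at x)"
    using real_differentiable_def by blast
  obtain Dy where Dy: "((\<lambda>t. G (x, t)) has_real_derivative Dy) (at y)"
    using G(3) p real_differentiable_def by blast
  have "eventually (\<lambda>t. iter_pd ds f (x, t) = G (x, t)) (nhds y)"
    using eventually_vertical_in_open[OF U p] G(1) by (auto elim!: eventually_mono)
  from DERIV_cong_ev[OF refl this refl] Dy show "(\<lambda>t. iter_pd ds f (x, t)) differentiable (at y)"
    using real_differentiable_def by blast
qed

lemma smooth_on_add: "smooth_on U f \<Longrightarrow> smooth_on U g \<Longrightarrow> smooth_on U (\<lambda>q. f q + g q)"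
proof (rule smooth_onI_local)
  assume f: "smooth_on U f" and g: "smooth_on U g"
  show "open U" using f smooth_on_open by blast
  fix ds
  have fd: "smooth_on U (iter_pd ds f)" and gd: "smooth_on U (iter_pd ds g)"
    using f g smooth_on_iter_pd by auto
  show "\<exists>F. (\<forall>p\<in>U. iter_pd ds (\<lambda>q. f q + g q) p = F p) \<and> continuous_on U F \<and>
      (\<forall>x y. (x, y) \<in> U \<longrightarrow> (\<lambda>t. F (t, y)) differentiable (at x) \<and> (\<lambda>t. F (x, t)) differentiable (at y))"
  proof (intro exI conjI allI impI ballI)
    show "iter_pd ds (\<lambda>q. f q + g q) p = iter_pd ds f p + iter_pd ds g p" if "p \<in> U" for p
      using iter_pd_add[OF f g that] .
    show "continuous_on U (\<lambda>p. iter_pd ds f p + iter_pd ds g p)"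
      by (intro continuous_on_add smooth_on_continuous_on fd gd)
    fix x y assume p: "(x, y) \<in> U"
    show "(\<lambda>t. iter_pd ds f (t, y) + iter_pd ds g (t, y)) differentiable (at x)"
      using DERIV_add[OF smooth_on_has_pdx[OF fd p] smooth_on_has_pdx[OF gd p]]
        real_differentiable_def by blast
    show "(\<lambda>t. iter_pd ds f (x, t) + iter_pd ds g (x, t)) differentiable (at y)"
      using DERIV_add[OF smooth_on_has_pdy[OF fd p] smooth_on_has_pdy[OF gd p]]
        real_differentiable_def by blast
  qed
qed

lemma second_difference_pdy_pdx:
  assumes f: "smooth_on U f" and s: "0 < s" and square: "{x0..x0 + s} \<times> {y0..y0 + s} \<subseteq> U"
  shows "\<exists>\<xi> \<eta>. (\<xi>, \<eta>) \<in> {x0..x0 + s} \<times> {y0..y0 + s} \<and>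
    f (x0 + s, y0 + s) - f (x0 + s, y0) - f (x0, y0 + s) + f (x0, y0) = s * (s * pdy (pdx f) (\<xi>, \<eta>))"
proof -
  have "\<exists>\<xi>. x0 < \<xi> \<and> \<xi> < x0 + s \<and>
      (\<lambda>u. f (u, y0 + s) - f (u, y0)) (x0 + s) - (\<lambda>u. f (u, y0 + s) - f (u, y0)) x0 =
      (x0 + s - x0) * (pdx f (\<xi>, y0 + s) - pdx f (\<xi>, y0))"
  proof (rule MVT2)
    fix u assume "x0 \<le> u" "u \<le> x0 + s"
    then have "(u, y0 + s) \<in> U" "(u, y0) \<in> U" using square s by auto
    then show "((\<lambda>u. f (u, y0 + s) - f (u, y0)) has_real_derivative
        pdx f (u, y0 + s) - pdx f (u, y0)) (at u)"
      by (intro DERIV_diff smooth_on_has_pdx[OF f])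
  qed (use s in simp)
  then obtain \<xi> where \<xi>: "x0 < \<xi>" "\<xi> < x0 + s"
    and diff_x: "f (x0 + s, y0 + s) - f (x0 + s, y0) - f (x0, y0 + s) + f (x0, y0) =
      s * (pdx f (\<xi>, y0 + s) - pdx f (\<xi>, y0))"
    by (auto simp: algebra_simps)
  have "\<exists>\<eta>. y0 < \<eta> \<and> \<eta> < y0 + s \<and>
      (\<lambda>v. pdx f (\<xi>, v)) (y0 + s) - (\<lambda>v. pdx f (\<xi>, v)) y0 = (y0 + s - y0) * pdy (pdx f) (\<xi>, \<eta>)"
  proof (rule MVT2)
    fix v assume "y0 \<le> v" "v \<le> y0 + s"
    then have "(\<xi>, v) \<in> U" using square \<xi> by auto
    then show "((\<lambda>v. pdx f (\<xi>, v)) has_real_derivative pdy (pdx f) (\<xi>, v)) (at v)"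
      by (rule smooth_on_has_pdy[OF smooth_on_pdx[OF f]])
  qed (use s in simp)
  then obtain \<eta> where "y0 < \<eta>" "\<eta> < y0 + s" "pdx f (\<xi>, y0 + s) - pdx f (\<xi>, y0) = s * pdy (pdx f) (\<xi>, \<eta>)"
    by auto
  then show ?thesis using \<xi> diff_x by (intro exI[of _ \<xi>] exI[of _ \<eta>]) auto
qed

lemma second_difference_pdx_pdy:
  assumes f: "smooth_on U f" and s: "0 < s" and square: "{x0..x0 + s} \<times> {y0..y0 + s} \<subseteq> U"
  shows "\<exists>\<xi> \<eta>. (\<xi>, \<eta>) \<in> {x0..x0 + s} \<times> {y0..y0 + s} \<and>
    f (x0 + s, y0 + s) - f (x0 + s, y0) - f (x0, y0 + s) + f (x0, y0) = s * (s * pdx (pdy f) (\<xi>, \<eta>))"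
proof -
  have "\<exists>\<eta>. y0 < \<eta> \<and> \<eta> < y0 + s \<and>
      (\<lambda>v. f (x0 + s, v) - f (x0, v)) (y0 + s) - (\<lambda>v. f (x0 + s, v) - f (x0, v)) y0 =
      (y0 + s - y0) * (pdy f (x0 + s, \<eta>) - pdy f (x0, \<eta>))"
  proof (rule MVT2)
    fix v assume "y0 \<le> v" "v \<le> y0 + s"
    then have "(x0 + s, v) \<in> U" "(x0, v) \<in> U" using square s by auto
    then show "((\<lambda>v. f (x0 + s, v) - f (x0, v)) has_real_derivative
        pdy f (x0 + s, v) - pdy f (x0, v)) (at v)"
      by (intro DERIV_diff smooth_on_has_pdy[OF f])
  qed (use s in simp)
  then obtain \<eta> where \<eta>: "y0 < \<eta>" "\<eta> < y0 + s"
    and diff_y: "f (x0 + s, y0 + s) - f (x0 + s, y0) - f (x0, y0 + s) + f (x0, y0) =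
      s * (pdy f (x0 + s, \<eta>) - pdy f (x0, \<eta>))"
    by (auto simp: algebra_simps)
  have "\<exists>\<xi>. x0 < \<xi> \<and> \<xi> < x0 + s \<and>
      (\<lambda>u. pdy f (u, \<eta>)) (x0 + s) - (\<lambda>u. pdy f (u, \<eta>)) x0 = (x0 + s - x0) * pdx (pdy f) (\<xi>, \<eta>)"
  proof (rule MVT2)
    fix u assume "x0 \<le> u" "u \<le> x0 + s"
    then have "(u, \<eta>) \<in> U" using square \<eta> by auto
    then show "((\<lambda>u. pdy f (u, \<eta>)) has_real_derivative pdx (pdy f) (u, \<eta>)) (at u)"
      by (rule smooth_on_has_pdx[OF smooth_on_pdy[OF f]])
  qed (use s in simp)
  then obtain \<xi> where "x0 < \<xi>" "\<xi> < x0 + s" "pdy f (x0 + s, \<eta>) - pdy f (x0, \<eta>) = s * pdx (pdy f) (\<xi>, \<eta>)"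
    by auto
  then show ?thesis using \<eta> diff_y by (intro exI[of _ \<xi>] exI[of _ \<eta>]) auto
qed

lemma isCont_eq_if_values_meet_nearby:
  fixes A B :: "'a::metric_space \<Rightarrow> real"
  assumes "isCont A p" "isCont B p"
    and meet: "\<And>e. 0 < e \<Longrightarrow> \<exists>p1 p2. dist p1 p < e \<and> dist p2 p < e \<and> A p1 = B p2"
  shows "A p = B p"
proof (rule ccontr)
  assume "A p \<noteq> B p"
  define e where "e = \<bar>A p - B p\<bar> / 2"
  have e: "0 < e" using \<open>A p \<noteq> B p\<close> by (simp add: e_def)
  obtain dA where dA: "0 < dA" "\<And>q. dist q p < dA \<Longrightarrow> dist (A q) (A p) < e"
    using assms(1) e unfolding continuous_at_eps_delta by blast
  obtain dB where dB: "0 < dB" "\<And>q. dist q p < dB \<Longrightarrow> dist (B q) (B p) < e"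
    using assms(2) e unfolding continuous_at_eps_delta by blast
  obtain p1 p2 where "dist p1 p < min dA dB" "dist p2 p < min dA dB" "A p1 = B p2"
    using meet[of "min dA dB"] dA(1) dB(1) by auto
  then have "\<bar>A p1 - A p\<bar> < e" "\<bar>A p1 - B p\<bar> < e"
    using dA(2)[of p1] dB(2)[of p2] by (auto simp: dist_real_def)
  then show False using abs_triangle_ineq4[of "A p1 - B p" "A p1 - A p"] unfolding e_def by simp
qed

lemma square_subset_cball:
  "{x0..x0 + s} \<times> {y0..y0 + s} \<subseteq> cball (x0, y0) (2 * s)"
proof
  fix q assume "q \<in> {x0..x0 + s} \<times> {y0..y0 + s}"
  then obtain u v where q: "q = (u, v)" "x0 \<le> u" "u \<le> x0 + s" "y0 \<le> v" "v \<le> y0 + s" by auto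
  have "dist (x0, y0) q = sqrt ((u - x0)\<^sup>2 + (v - y0)\<^sup>2)"
    by (simp add: q dist_Pair_Pair dist_real_def power2_commute)
  also have "\<dots> \<le> \<bar>u - x0\<bar> + \<bar>v - y0\<bar>" by (rule sqrt_sum_squares_le_sum_abs)
  also have "\<dots> \<le> 2 * s" using q by auto
  finally show "q \<in> cball (x0, y0) (2 * s)" by simp
qed

lemma pdx_pdy_commute:
  assumes f: "smooth_on U f" and p: "p \<in> U"
  shows "pdx (pdy f) p = pdy (pdx f) p"
proof -
  obtain x0 y0 where p0: "p = (x0, y0)" by (cases p)
  obtain r where r: "0 < r" "ball p r \<subseteq> U"
    using smooth_on_open[OF f] p open_contains_ball by blast
  have square: "{x0..x0 + s} \<times> {y0..y0 + s} \<subseteq> U \<inter> cball p (2 * s)" if "2 * s < r" for s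
    using square_subset_cball[of x0 s y0] r(2) that unfolding p0 by fastforce
  have near: "\<exists>p1 p2. dist p1 p < e \<and> dist p2 p < e \<and> pdx (pdy f) p1 = pdy (pdx f) p2"
    if "0 < e" for e
  proof -
    define s where "s = min e r / 3"
    have s: "0 < s" "2 * s < r" "2 * s < e" using r that by (auto simp: s_def)
    obtain \<xi> \<eta> where \<xi>\<eta>: "(\<xi>, \<eta>) \<in> {x0..x0 + s} \<times> {y0..y0 + s}"
      "f (x0 + s, y0 + s) - f (x0 + s, y0) - f (x0, y0 + s) + f (x0, y0) = s * (s * pdy (pdx f) (\<xi>, \<eta>))"
      using second_difference_pdy_pdx[OF f s(1)] square[OF s(2)] by blast
    obtain \<xi>' \<eta>' where \<xi>\<eta>': "(\<xi>', \<eta>') \<in> {x0..x0 + s} \<times> {y0..y0 + s}"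
      "f (x0 + s, y0 + s) - f (x0 + s, y0) - f (x0, y0 + s) + f (x0, y0) = s * (s * pdx (pdy f) (\<xi>', \<eta>'))"
      using second_difference_pdx_pdy[OF f s(1)] square[OF s(2)] by blast
    have "pdx (pdy f) (\<xi>', \<eta>') = pdy (pdx f) (\<xi>, \<eta>)" using \<xi>\<eta>(2) \<xi>\<eta>'(2) s(1) by simp
    moreover have "dist (\<xi>', \<eta>') p < e" "dist (\<xi>, \<eta>) p < e"
      using square[OF s(2)] \<xi>\<eta>(1) \<xi>\<eta>'(1) s(3) by (fastforce simp: dist_commute)+
    ultimately show ?thesis by blast
  qed
  have "isCont (iter_pd ds f) p" for ds
    using f p smooth_on_open continuous_on_eq_continuous_at unfolding smooth_on_def by blast
  from this[of "[True, False]"] this[of "[False, True]"]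
  have "isCont (pdx (pdy f)) p" "isCont (pdy (pdx f)) p" by simp_all
  then show ?thesis using near by (rule isCont_eq_if_values_meet_nearby)
qed

definition jet :: "(real \<times> real \<Rightarrow> real) \<Rightarrow> real \<times> real \<Rightarrow> nat \<Rightarrow> nat \<Rightarrow> real" where
  "jet f p m n = iter_pd (replicate m True @ replicate n False) f p"

lemma count_list_replicate: "count_list (replicate n x) y = (if x = y then n else 0)"
  by (induction n) auto

lemma smooth_on_jet: "smooth_on U f \<Longrightarrow> smooth_on U (\<lambda>q. jet f q m n)"
  unfolding jet_def by (rule smooth_on_iter_pd)

lemma has_pdx_jet:
  assumes "smooth_on U f" "(x, y) \<in> U"
  shows "((\<lambda>t. jet f (t, y) m n) has_real_derivative jet f (x, y) (Suc m) n) (at x)"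
  using smooth_on_has_pdx[OF smooth_on_jet[OF assms(1)] assms(2)] by (simp add: jet_def)

lemma pdy_iter_pdx_commute:
  "smooth_on U f \<Longrightarrow> p \<in> U \<Longrightarrow>
    pdy (iter_pd (replicate m True) f) p = iter_pd (replicate m True) (pdy f) p"
proof (induction m arbitrary: p)
  case (Suc m)
  have U: "open U" using Suc.prems smooth_on_open by blast
  have "pdy (iter_pd (replicate (Suc m) True) f) p = pdx (pdy (iter_pd (replicate m True) f)) p"
    using pdx_pdy_commute[OF smooth_on_iter_pd[OF Suc.prems(1)] Suc.prems(2)] by simp
  also have "\<dots> = pdx (iter_pd (replicate m True) (pdy f)) p"
    using pdx_cong_on[OF U Suc.IH[OF Suc.prems(1)] Suc.prems(2)] .
  finally show ?case by simp
qed simp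

lemma has_pdy_jet:
  assumes "smooth_on U f" "(x, y) \<in> U"
  shows "((\<lambda>t. jet f (x, t) m n) has_real_derivative jet f (x, y) m (Suc n)) (at y)"
proof -
  have "pdy (\<lambda>q. jet f q m n) (x, y) =
      pdy (iter_pd (replicate m True) (iter_pd (replicate n False) f)) (x, y)"
    by (simp add: jet_def iter_pd_append)
  also have "\<dots> = iter_pd (replicate m True) (pdy (iter_pd (replicate n False) f)) (x, y)"
    using pdy_iter_pdx_commute[OF smooth_on_iter_pd[OF assms(1)] assms(2)] .
  also have "\<dots> = jet f (x, y) m (Suc n)"
    by (simp add: jet_def iter_pd_append[symmetric])
  finally show ?thesis using smooth_on_has_pdy[OF smooth_on_jet[OF assms(1)] assms(2), of m n] by simp
qed

lemma iter_pd_eq_jet: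
  assumes f: "smooth_on U f"
  shows "p \<in> U \<Longrightarrow> iter_pd ds f p = jet f p (count_list ds True) (count_list ds False)"
proof (induction ds arbitrary: p)
  case (Cons d ds)
  have U: "open U" using f smooth_on_open by blast
  obtain x y where p: "p = (x, y)" by (cases p)
  show ?case
  proof (cases d)
    case True
    have "iter_pd (d # ds) f p = pdx (\<lambda>q. jet f q (count_list ds True) (count_list ds False)) p"
      using True pdx_cong_on[OF U Cons.IH Cons.prems] by simp
    then show ?thesis
      using True DERIV_imp_deriv[OF has_pdx_jet[OF f Cons.prems[unfolded p]]] by (simp add: p pdx_def)
  next
    case False
    have "iter_pd (d # ds) f p = pdy (\<lambda>q. jet f q (count_list ds True) (count_list ds False)) p"
      using False pdy_cong_on[OF U Cons.IH Cons.prems] by simp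
    then show ?thesis
      using False DERIV_imp_deriv[OF has_pdy_jet[OF f Cons.prems[unfolded p]]] by (simp add: p pdy_def)
  qed
qed (simp add: jet_def)

lemma jet_pdx:
  assumes "smooth_on U f" "p \<in> U"
  shows "jet (pdx f) p m n = jet f p (Suc m) n"
proof -
  have "jet (pdx f) p m n = iter_pd (replicate m True @ replicate n False @ [True]) f p"
    using iter_pd_append[of "replicate m True @ replicate n False" "[True]" f] by (simp add: jet_def)
  also have "\<dots> = jet f p (Suc m) n"
    using iter_pd_eq_jet[OF assms] by (simp add: count_list_replicate)
  finally show ?thesis .
qed

lemma jet_pdy:
  assumes "smooth_on U f" "p \<in> U"
  shows "jet (pdy f) p m n = jet f p m (Suc n)"
proof -
  have "jet (pdy f) p m n = iter_pd (replicate m True @ replicate n False @ [False]) f p"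
    using iter_pd_append[of "replicate m True @ replicate n False" "[False]" f] by (simp add: jet_def)
  also have "\<dots> = jet f p m (Suc n)"
    using iter_pd_eq_jet[OF assms] by (simp add: count_list_replicate)
  finally show ?thesis .
qed

definition jet_mult :: "(nat \<Rightarrow> nat \<Rightarrow> real) \<Rightarrow> (nat \<Rightarrow> nat \<Rightarrow> real) \<Rightarrow> nat \<Rightarrow> nat \<Rightarrow> real" where
  "jet_mult u v m n =
    (\<Sum>i\<le>m. \<Sum>j\<le>n. real (m choose i) * real (n choose j) * (u i j * v (m - i) (n - j)))"

lemma sum_Suc_choose:
  fixes K :: "nat \<Rightarrow> real"
  shows "(\<Sum>i\<le>Suc m. real (Suc m choose i) * K i) = (\<Sum>i\<le>m. real (m choose i) * (K (Suc i) + K i))"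
proof -
  have "(\<Sum>i\<le>Suc m. real (Suc m choose i) * K i) =
      (\<Sum>i\<le>m. real (m choose i) * K (Suc i)) + (K 0 + (\<Sum>i\<le>m. real (m choose Suc i) * K (Suc i)))"
    by (simp only: sum.atMost_Suc_shift) (simp add: algebra_simps sum.distrib)
  also have "K 0 + (\<Sum>i\<le>m. real (m choose Suc i) * K (Suc i)) = (\<Sum>i\<le>Suc m. real (m choose i) * K i)"
    by (simp only: sum.atMost_Suc_shift) simp
  also have "\<dots> = (\<Sum>i\<le>m. real (m choose i) * K i)" by simp
  finally show ?thesis by (simp add: algebra_simps sum.distrib)
qed

lemma jet_mult_Suc_x:
  "jet_mult u v (Suc m) n = jet_mult (\<lambda>i j. u (Suc i) j) v m n + jet_mult u (\<lambda>i j. v (Suc i) j) m n"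
proof -
  define K where "K i = (\<Sum>j\<le>n. real (n choose j) * (u i j * v (Suc m - i) (n - j)))" for i
  have "jet_mult u v (Suc m) n = (\<Sum>i\<le>Suc m. real (Suc m choose i) * K i)"
    by (simp add: jet_mult_def K_def sum_distrib_left mult.assoc)
  also have "\<dots> = (\<Sum>i\<le>m. real (m choose i) * (K (Suc i) + K i))" by (rule sum_Suc_choose)
  also have "\<dots> = jet_mult (\<lambda>i j. u (Suc i) j) v m n + jet_mult u (\<lambda>i j. v (Suc i) j) m n"
    unfolding jet_mult_def sum.distrib[symmetric]
  proof (rule sum.cong[OF refl])
    fix i assume "i \<in> {..m}"
    then have i: "Suc m - i = Suc (m - i)" by (simp add: Suc_diff_le)
    show "real (m choose i) * (K (Suc i) + K i) =
        (\<Sum>j\<le>n. real (m choose i) * real (n choose j) * (u (Suc i) j * v (m - i) (n - j)) +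
          real (m choose i) * real (n choose j) * (u i j * v (Suc (m - i)) (n - j)))"
      by (simp add: K_def i sum_distrib_left sum.distrib algebra_simps)
  qed
  finally show ?thesis .
qed

lemma jet_mult_transpose: "jet_mult u v m n = jet_mult (\<lambda>i j. u j i) (\<lambda>i j. v j i) n m"
  unfolding jet_mult_def by (subst sum.swap) (simp add: mult_ac)

lemma jet_mult_Suc_y:
  "jet_mult u v m (Suc n) = jet_mult (\<lambda>i j. u i (Suc j)) v m n + jet_mult u (\<lambda>i j. v i (Suc j)) m n"
proof -
  have "jet_mult u v m (Suc n) = jet_mult (\<lambda>i j. u j i) (\<lambda>i j. v j i) (Suc n) m"
    by (rule jet_mult_transpose)
  also have "\<dots> = jet_mult (\<lambda>i j. u j (Suc i)) (\<lambda>i j. v j i) n m +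
      jet_mult (\<lambda>i j. u j i) (\<lambda>i j. v j (Suc i)) n m"
    by (rule jet_mult_Suc_x)
  finally show ?thesis
    by (simp only: jet_mult_transpose[of "\<lambda>i j. u i (Suc j)" v m n]
        jet_mult_transpose[of u "\<lambda>i j. v i (Suc j)" m n])
qed

lemma jet_mult_commute: "jet_mult u v m n = jet_mult v u m n"
proof -
  have rev: "(\<Sum>i\<le>k. F i) = (\<Sum>i\<le>k. F (k - i))" for k and F :: "nat \<Rightarrow> real"
    by (rule sum.reindex_bij_witness[where i="\<lambda>i. k - i" and j="\<lambda>i. k - i"]) auto
  define F where "F i j = real (m choose i) * real (n choose j) * (u i j * v (m - i) (n - j))" for i j
  have "jet_mult u v m n = (\<Sum>i\<le>m. \<Sum>j\<le>n. F i j)" by (simp add: jet_mult_def F_def)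
  also have "\<dots> = (\<Sum>i\<le>m. \<Sum>j\<le>n. F (m - i) j)" by (rule rev)
  also have "\<dots> = (\<Sum>i\<le>m. \<Sum>j\<le>n. F (m - i) (n - j))" by (intro sum.cong refl rev)
  also have "\<dots> = jet_mult v u m n"
    unfolding jet_mult_def F_def by (intro sum.cong refl) (simp add: binomial_symmetric[symmetric] mult_ac)
  finally show ?thesis .
qed

lemma jet_mult_single:
  "jet_mult (\<lambda>i j. if i = i0 \<and> j = j0 then r else 0) v m n =
    (if i0 \<le> m \<and> j0 \<le> n then real (m choose i0) * real (n choose j0) * r * v (m - i0) (n - j0) else 0)"
proof -
  let ?X = "\<lambda>i j. real (m choose i) * real (n choose j) * r * v (m - i) (n - j)"
  have inner: "(\<Sum>j\<le>n. if i = i0 \<and> j = j0 then ?X i j else 0) = (if i = i0 \<and> j0 \<le> n then ?X i j0 else 0)"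
    for i by (cases "i = i0") auto
  have "jet_mult (\<lambda>i j. if i = i0 \<and> j = j0 then r else 0) v m n =
      (\<Sum>i\<le>m. \<Sum>j\<le>n. if i = i0 \<and> j = j0 then ?X i j else 0)"
    unfolding jet_mult_def by (intro sum.cong refl) simp
  also have "\<dots> = (if i0 \<le> m \<and> j0 \<le> n then ?X i0 j0 else 0)"
    unfolding inner by (cases "j0 \<le> n") auto
  finally show ?thesis .
qed

lemma has_pdx_jet_mult:
  assumes f: "smooth_on U f" and g: "smooth_on U g" and p: "(x, y) \<in> U"
  shows "((\<lambda>t. jet_mult (jet f (t, y)) (jet g (t, y)) m n) has_real_derivative
    jet_mult (jet f (x, y)) (jet g (x, y)) (Suc m) n) (at x)"
proof -
  have "((\<lambda>t. jet_mult (jet f (t, y)) (jet g (t, y)) m n) has_real_derivative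
      (\<Sum>i\<le>m. \<Sum>j\<le>n. real (m choose i) * real (n choose j) *
        (jet f (x, y) i j * jet g (x, y) (Suc (m - i)) (n - j) +
         jet f (x, y) (Suc i) j * jet g (x, y) (m - i) (n - j)))) (at x)"
    unfolding jet_mult_def
    by (intro DERIV_sum DERIV_cmult DERIV_mult' has_pdx_jet[OF f p] has_pdx_jet[OF g p])
  then show ?thesis
    by (rule DERIV_cong) (simp only: jet_mult_Suc_x, simp add: jet_mult_def sum.distrib algebra_simps)
qed

lemma has_pdy_jet_mult:
  assumes f: "smooth_on U f" and g: "smooth_on U g" and p: "(x, y) \<in> U"
  shows "((\<lambda>t. jet_mult (jet f (x, t)) (jet g (x, t)) m n) has_real_derivative
    jet_mult (jet f (x, y)) (jet g (x, y)) m (Suc n)) (at y)"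
proof -
  have "((\<lambda>t. jet_mult (jet f (x, t)) (jet g (x, t)) m n) has_real_derivative
      (\<Sum>i\<le>m. \<Sum>j\<le>n. real (m choose i) * real (n choose j) *
        (jet f (x, y) i j * jet g (x, y) (m - i) (Suc (n - j)) +
         jet f (x, y) i (Suc j) * jet g (x, y) (m - i) (n - j)))) (at y)"
    unfolding jet_mult_def
    by (intro DERIV_sum DERIV_cmult DERIV_mult' has_pdy_jet[OF f p] has_pdy_jet[OF g p])
  then show ?thesis
    by (rule DERIV_cong) (simp only: jet_mult_Suc_y, simp add: jet_mult_def sum.distrib algebra_simps)
qed

lemma iter_pd_mult:
  assumes f: "smooth_on U f" and g: "smooth_on U g"
  shows "p \<in> U \<Longrightarrow> iter_pd ds (\<lambda>q. f q * g q) p =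
    jet_mult (jet f p) (jet g p) (count_list ds True) (count_list ds False)"
proof (induction ds arbitrary: p)
  case (Cons d ds)
  have U: "open U" using f smooth_on_open by blast
  obtain x y where p: "p = (x, y)" by (cases p)
  let ?J = "\<lambda>q. jet_mult (jet f q) (jet g q) (count_list ds True) (count_list ds False)"
  show ?case
  proof (cases d)
    case True
    have "iter_pd (d # ds) (\<lambda>q. f q * g q) p = pdx ?J p"
      using True pdx_cong_on[OF U Cons.IH Cons.prems] by simp
    then show ?thesis
      using True DERIV_imp_deriv[OF has_pdx_jet_mult[OF f g Cons.prems[unfolded p]]]
      by (simp add: p pdx_def)
  next
    case False
    have "iter_pd (d # ds) (\<lambda>q. f q * g q) p = pdy ?J p"
      using False pdy_cong_on[OF U Cons.IH Cons.prems] by simp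
    then show ?thesis
      using False DERIV_imp_deriv[OF has_pdy_jet_mult[OF f g Cons.prems[unfolded p]]]
      by (simp add: p pdy_def)
  qed
qed (simp add: jet_mult_def jet_def)

lemma smooth_on_mult: "smooth_on U f \<Longrightarrow> smooth_on U g \<Longrightarrow> smooth_on U (\<lambda>q. f q * g q)"
proof (rule smooth_onI_local)
  assume f: "smooth_on U f" and g: "smooth_on U g"
  show "open U" using f smooth_on_open by blast
  fix ds
  let ?m = "count_list ds True" and ?n = "count_list ds False"
  show "\<exists>F. (\<forall>p\<in>U. iter_pd ds (\<lambda>q. f q * g q) p = F p) \<and> continuous_on U F \<and>
      (\<forall>x y. (x, y) \<in> U \<longrightarrow> (\<lambda>t. F (t, y)) differentiable (at x) \<and> (\<lambda>t. F (x, t)) differentiable (at y))"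
  proof (intro exI conjI allI impI ballI)
    show "iter_pd ds (\<lambda>q. f q * g q) p = jet_mult (jet f p) (jet g p) ?m ?n" if "p \<in> U" for p
      using iter_pd_mult[OF f g that] .
    show "continuous_on U (\<lambda>p. jet_mult (jet f p) (jet g p) ?m ?n)"
      unfolding jet_mult_def
      by (intro continuous_intros smooth_on_continuous_on smooth_on_jet f g)
    fix x y assume p: "(x, y) \<in> U"
    show "(\<lambda>t. jet_mult (jet f (t, y)) (jet g (t, y)) ?m ?n) differentiable (at x)"
      using has_pdx_jet_mult[OF f g p] real_differentiable_def by blast
    show "(\<lambda>t. jet_mult (jet f (x, t)) (jet g (x, t)) ?m ?n) differentiable (at y)"
      using has_pdy_jet_mult[OF f g p] real_differentiable_def by blast
  qed
qed

section \<open>Borel's lemma in two variables\<close>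

text \<open>The \<open>(m, n)\<close>-th term of the Borel series is \<open>borel_coeff c m n \<cdot> \<rho>\<^sub>m(\<lambda> x) \<rho>\<^sub>n(\<lambda> y)\<close> with
  \<open>\<rho>\<^sub>m = bump_monom m\<close> and \<open>\<lambda> = borel_scale c m n\<close>; \<open>borel_term c p q\<close> is its partial derivative
  of order \<open>(p, q)\<close>. The scale is chosen so that every derivative of order \<open>p + q < m + n\<close> of the
  term is bounded by \<open>2\<^sup>-\<^sup>k\<close>, where \<open>k = prod_encode (m, n)\<close> is the position of the term in
  the series.\<close>

definition borel_scale :: "(nat \<Rightarrow> nat \<Rightarrow> real) \<Rightarrow> nat \<Rightarrow> nat \<Rightarrow> real" where
  "borel_scale c m n = 1 + \<bar>c m n\<bar> / (fact m * fact n) *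
     (\<Sum>p<m + n. bump_bound m p) * (\<Sum>q<m + n. bump_bound n q) * 2 ^ prod_encode (m, n)"

definition borel_coeff :: "(nat \<Rightarrow> nat \<Rightarrow> real) \<Rightarrow> nat \<Rightarrow> nat \<Rightarrow> real" where
  "borel_coeff c m n = c m n / (fact m * fact n * borel_scale c m n ^ (m + n))"

definition borel_term :: "(nat \<Rightarrow> nat \<Rightarrow> real) \<Rightarrow> nat \<Rightarrow> nat \<Rightarrow> real \<times> real \<Rightarrow> nat \<Rightarrow> nat \<Rightarrow> real" where
  "borel_term c p q z m n = borel_coeff c m n * borel_scale c m n ^ (p + q) *
     (deriv ^^ p) (bump_monom m) (borel_scale c m n * fst z) *
     (deriv ^^ q) (bump_monom n) (borel_scale c m n * snd z)"

definition borel_bound :: "(nat \<Rightarrow> nat \<Rightarrow> real) \<Rightarrow> nat \<Rightarrow> nat \<Rightarrow> nat \<Rightarrow> nat \<Rightarrow> real" where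
  "borel_bound c p q m n =
     \<bar>borel_coeff c m n\<bar> * borel_scale c m n ^ (p + q) * bump_bound m p * bump_bound n q"

definition borel_sum :: "(nat \<Rightarrow> nat \<Rightarrow> real) \<Rightarrow> nat \<Rightarrow> nat \<Rightarrow> real \<times> real \<Rightarrow> real" where
  "borel_sum c p q z = (\<Sum>k. case_prod (borel_term c p q z) (prod_decode k))"

lemma borel_scale_ge_1: "1 \<le> borel_scale c m n"
  unfolding borel_scale_def by (simp add: sum_nonneg bump_bound_nonneg)

lemma abs_borel_term_le: "\<bar>borel_term c p q z m n\<bar> \<le> borel_bound c p q m n"
proof -
  have "0 \<le> borel_scale c m n" using borel_scale_ge_1[of c m n] by linarith
  then show ?thesis
    unfolding borel_term_def borel_bound_def abs_mult
    by (intro mult_mono higher_deriv_bump_monom_le mult_nonneg_nonneg bump_bound_nonneg) auto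
qed

lemma borel_bound_nonneg: "0 \<le> borel_bound c p q m n"
  using abs_borel_term_le[of c p q 0 m n] by linarith

lemma borel_bound_le_half_power:
  assumes order: "p + q < m + n"
  shows "borel_bound c p q m n \<le> (1 / 2) ^ prod_encode (m, n)"
proof -
  define L where "L = borel_scale c m n"
  define K where "K = (\<Sum>p<m + n. bump_bound m p) * (\<Sum>q<m + n. bump_bound n q)"
  define X where "X = \<bar>c m n\<bar> / (fact m * fact n) * K"
  have L1: "1 \<le> L" unfolding L_def by (rule borel_scale_ge_1)
  have L: "L = 1 + X * 2 ^ prod_encode (m, n)" by (simp add: L_def X_def K_def borel_scale_def)
  have "bump_bound m p \<le> (\<Sum>p<m + n. bump_bound m p)" "bump_bound n q \<le> (\<Sum>q<m + n. bump_bound n q)"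
    using order by (auto intro!: member_le_sum bump_bound_nonneg)
  then have BK: "bump_bound m p * bump_bound n q \<le> K"
    unfolding K_def by (intro mult_mono bump_bound_nonneg) (auto intro: order_trans[OF bump_bound_nonneg])
  have "L ^ (p + q) * L \<le> L ^ (m + n)"
    using power_increasing[of "Suc (p + q)" "m + n" L] L1 order by (simp add: mult.commute)
  then have pow: "L ^ (p + q) / L ^ (m + n) \<le> 1 / L" using L1 by (simp add: field_simps)
  have "borel_bound c p q m n =
      \<bar>c m n\<bar> / (fact m * fact n) * (L ^ (p + q) / L ^ (m + n)) * (bump_bound m p * bump_bound n q)"
    unfolding borel_bound_def borel_coeff_def L_def[symmetric] using L1 by (simp add: abs_mult abs_divide)
  also have "\<dots> \<le> \<bar>c m n\<bar> / (fact m * fact n) * (1 / L) * K"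
    using L1 by (intro mult_mono pow BK mult_nonneg_nonneg bump_bound_nonneg) auto
  also have "\<dots> = X / L" by (simp add: X_def)
  also have "\<dots> \<le> (1 / 2) ^ prod_encode (m, n)"
    using L1 by (simp add: L divide_simps power_one_over algebra_simps)
  finally show ?thesis .
qed

lemma prod_decode_eq_iff: "prod_decode k = x \<longleftrightarrow> k = prod_encode x"
proof
  assume "prod_decode k = x"
  then show "k = prod_encode x" using prod_decode_inverse[of k] by simp
qed simp

lemma triangle_mono: "a \<le> b \<Longrightarrow> triangle a \<le> triangle b"
  by (induction b) (auto simp: le_Suc_eq)

lemma summable_borel_bound: "summable (\<lambda>k. case_prod (borel_bound c p q) (prod_decode k))"
proof (rule summable_comparison_test_ev[OF _ summable_geometric[of "1 / 2 :: real"]])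
  have "eventually (\<lambda>k. triangle (p + q) + (p + q) < k) sequentially" by (rule eventually_gt_at_top)
  then show "eventually (\<lambda>k. norm (case_prod (borel_bound c p q) (prod_decode k)) \<le> (1 / 2) ^ k)
      sequentially"
  proof (rule eventually_mono)
    fix k assume k: "triangle (p + q) + (p + q) < k"
    obtain m n where "prod_decode k = (m, n)" by (cases "prod_decode k")
    then have kmn: "k = prod_encode (m, n)" by (simp add: prod_decode_eq_iff)
    have "p + q < m + n"
    proof (rule ccontr)
      assume "\<not> p + q < m + n"
      then have "triangle (m + n) + m \<le> triangle (p + q) + (p + q)"
        using triangle_mono[of "m + n" "p + q"] by linarith
      then show False using k kmn by (simp add: prod_encode_def)
    qed
    then show "norm (case_prod (borel_bound c p q) (prod_decode k)) \<le> (1 / 2) ^ k"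
      using borel_bound_le_half_power[of p q m n c] borel_bound_nonneg[of c p q m n] kmn by simp
  qed
qed auto

lemma summable_borel_term: "summable (\<lambda>k. case_prod (borel_term c p q z) (prod_decode k))"
  by (rule summable_comparison_test[OF _ summable_borel_bound])
    (auto intro: abs_borel_term_le split: prod.split)

lemma has_borel_term_x:
  "((\<lambda>t. borel_term c p q (t, y) m n) has_real_derivative borel_term c (Suc p) q (x, y) m n) (at x)"
proof -
  let ?L = "borel_scale c m n" and ?R = "(deriv ^^ p) (bump_monom m)"
  have "((\<lambda>t. ?R (?L * t)) has_real_derivative deriv ?R (?L * x) * ?L) (at x)"
    by (rule DERIV_chain2[OF deriv_has_real_derivative DERIV_cmult_Id])
      (rule smooth_higher_deriv_differentiable[OF smooth_bump_monom])
  then have "((\<lambda>t. borel_coeff c m n * ?L ^ (p + q) * ?R (?L * t) * (deriv ^^ q) (bump_monom n) (?L * y))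
      has_real_derivative borel_coeff c m n * ?L ^ (p + q) * (deriv ?R (?L * x) * ?L) *
        (deriv ^^ q) (bump_monom n) (?L * y)) (at x)"
    by (intro DERIV_cmult_right DERIV_cmult)
  then show ?thesis by (simp add: borel_term_def algebra_simps)
qed

lemma has_borel_term_y:
  "((\<lambda>t. borel_term c p q (x, t) m n) has_real_derivative borel_term c p (Suc q) (x, y) m n) (at y)"
proof -
  let ?L = "borel_scale c m n" and ?R = "(deriv ^^ q) (bump_monom n)"
  have "((\<lambda>t. ?R (?L * t)) has_real_derivative deriv ?R (?L * y) * ?L) (at y)"
    by (rule DERIV_chain2[OF deriv_has_real_derivative DERIV_cmult_Id])
      (rule smooth_higher_deriv_differentiable[OF smooth_bump_monom])
  then have "((\<lambda>t. borel_coeff c m n * ?L ^ (p + q) * (deriv ^^ p) (bump_monom m) (?L * x) * ?R (?L * t))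
      has_real_derivative borel_coeff c m n * ?L ^ (p + q) * (deriv ^^ p) (bump_monom m) (?L * x) *
        (deriv ?R (?L * y) * ?L)) (at y)"
    by (intro DERIV_cmult)
  then show ?thesis by (simp add: borel_term_def algebra_simps)
qed

lemma has_borel_sum_x:
  "((\<lambda>t. borel_sum c p q (t, y)) has_real_derivative borel_sum c (Suc p) q (x, y)) (at x)"
  unfolding borel_sum_def
proof (rule has_field_derivative_series'(2)[of UNIV _
      "\<lambda>k t. case_prod (borel_term c (Suc p) q (t, y)) (prod_decode k)"])
  show "uniformly_convergent_on UNIV
      (\<lambda>k t. \<Sum>i<k. case_prod (borel_term c (Suc p) q (t, y)) (prod_decode i))"
    by (rule Weierstrass_m_test'[OF _ summable_borel_bound])
      (auto intro: abs_borel_term_le split: prod.split)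
qed (auto intro: summable_borel_term has_borel_term_x split: prod.split)

lemma has_borel_sum_y:
  "((\<lambda>t. borel_sum c p q (x, t)) has_real_derivative borel_sum c p (Suc q) (x, y)) (at y)"
  unfolding borel_sum_def
proof (rule has_field_derivative_series'(2)[of UNIV _
      "\<lambda>k t. case_prod (borel_term c p (Suc q) (x, t)) (prod_decode k)"])
  show "uniformly_convergent_on UNIV
      (\<lambda>k t. \<Sum>i<k. case_prod (borel_term c p (Suc q) (x, t)) (prod_decode i))"
    by (rule Weierstrass_m_test'[OF _ summable_borel_bound])
      (auto intro: abs_borel_term_le split: prod.split)
qed (auto intro: summable_borel_term has_borel_term_y split: prod.split)

lemma continuous_on_borel_sum: "continuous_on UNIV (borel_sum c p q)"
proof -
  have cont: "continuous_on UNIV (\<lambda>z. borel_term c p q z m n)" for m n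
    unfolding borel_term_def
    by (intro continuous_intros
        continuous_on_compose2[OF smooth_continuous_on_higher_deriv[OF smooth_bump_monom]]) auto
  then have cont_case: "continuous_on UNIV (\<lambda>z. case_prod (borel_term c p q z) mn)" for mn
    by (cases mn) simp
  have "uniform_limit UNIV (\<lambda>k z. \<Sum>i<k. case_prod (borel_term c p q z) (prod_decode i))
      (borel_sum c p q) sequentially"
    unfolding borel_sum_def[abs_def]
    by (rule Weierstrass_m_test[OF _ summable_borel_bound])
      (auto intro: abs_borel_term_le split: prod.split)
  then show ?thesis
    by (rule uniform_limit_theorem[rotated])
      (auto intro!: always_eventually continuous_on_sum cont_case)
qed

lemma iter_pd_borel_sum:
  "iter_pd ds (borel_sum c 0 0) = borel_sum c (count_list ds True) (count_list ds False)"
proof (induction ds)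
  case (Cons d ds)
  have "pdx (borel_sum c p q) = borel_sum c (Suc p) q" "pdy (borel_sum c p q) = borel_sum c p (Suc q)"
    for p q
    by (auto simp: fun_eq_iff pdx_def pdy_def
        DERIV_imp_deriv[OF has_borel_sum_x] DERIV_imp_deriv[OF has_borel_sum_y])
  then show ?case using Cons by simp
qed simp

lemma borel_sum_origin: "borel_sum c p q (0, 0) = c p q"
proof -
  have origin_term: "borel_term c p q (0, 0) m n = (if (m, n) = (p, q) then c p q else 0)" for m n
    using borel_scale_ge_1[of c m n]
    by (auto simp: borel_term_def borel_coeff_def higher_deriv_bump_monom_0)
  have "case_prod (borel_term c p q (0, 0)) (prod_decode k) =
      (if k = prod_encode (p, q) then c p q else 0)" for k
  proof (cases "prod_decode k")
    case (Pair m n)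
    then have "k = prod_encode (m, n)" by (simp add: prod_decode_eq_iff)
    then show ?thesis using origin_term by simp
  qed
  then show ?thesis using sums_single[of "prod_encode (p, q)" "\<lambda>_. c p q"]
    by (simp add: borel_sum_def sums_iff)
qed

theorem borel_lemma: "\<exists>z. smooth_on UNIV z \<and> jet z (0, 0) = c"
proof (intro exI conjI)
  show "smooth_on UNIV (borel_sum c 0 0)"
    unfolding smooth_on_def iter_pd_borel_sum
    using continuous_on_borel_sum has_borel_sum_x has_borel_sum_y real_differentiable_def by blast
  show "jet (borel_sum c 0 0) (0, 0) = c"
    by (simp add: fun_eq_iff jet_def iter_pd_borel_sum count_list_replicate borel_sum_origin)
qed

section \<open>Solving the eikonal equation on jets\<close>

definition grad_inner_jet :: "(nat \<Rightarrow> nat \<Rightarrow> real) \<Rightarrow> (nat \<Rightarrow> nat \<Rightarrow> real) \<Rightarrow> nat \<Rightarrow> nat \<Rightarrow> real" where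
  "grad_inner_jet u v m n =
    jet_mult (\<lambda>i j. u (Suc i) j) (\<lambda>i j. v (Suc i) j) m n +
    jet_mult (\<lambda>i j. u i (Suc j)) (\<lambda>i j. v i (Suc j)) m n"

lemma iter_pd_grad_square:
  assumes z: "smooth_on U z" and p: "p \<in> U"
  shows "iter_pd ds (\<lambda>q. (pdx z q)\<^sup>2 + (pdy z q)\<^sup>2) p =
    grad_inner_jet (jet z p) (jet z p) (count_list ds True) (count_list ds False)"
proof -
  have zx: "smooth_on U (pdx z)" and zy: "smooth_on U (pdy z)"
    using z by (auto intro: smooth_on_pdx smooth_on_pdy)
  have "jet (pdx z) p = (\<lambda>i j. jet z p (Suc i) j)" "jet (pdy z) p = (\<lambda>i j. jet z p i (Suc j))"
    by (simp_all add: fun_eq_iff jet_pdx[OF z p] jet_pdy[OF z p])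
  then show ?thesis
    unfolding power2_eq_square grad_inner_jet_def
    using iter_pd_add[OF smooth_on_mult[OF zx zx] smooth_on_mult[OF zy zy] p]
      iter_pd_mult[OF zx zx p] iter_pd_mult[OF zy zy p] by simp
qed

lemma grad_inner_jet_commute: "grad_inner_jet u v m n = grad_inner_jet v u m n"
  unfolding grad_inner_jet_def by (rule arg_cong2[where f = "(+)"]; rule jet_mult_commute)

lemma grad_inner_jet_add_add:
  "grad_inner_jet (\<lambda>i j. u i j + v i j) (\<lambda>i j. u i j + v i j) m n =
    grad_inner_jet u u m n + grad_inner_jet u v m n + grad_inner_jet v u m n + grad_inner_jet v v m n"
  unfolding grad_inner_jet_def jet_mult_def by (simp add: sum.distrib[symmetric] algebra_simps)

text \<open>The product terms of \<open>grad_inner_jet u u m n\<close> pair coefficients whose orders add up to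
  \<open>m + n + 2\<close>; if \<open>u\<close> vanishes below order 3, only orders between 3 and \<open>m + n - 1\<close>
  contribute.\<close>

lemma grad_inner_jet_cong_low_orders:
  assumes u: "\<And>i j. i + j < 3 \<Longrightarrow> u i j = 0" and u': "\<And>i j. i + j < 3 \<Longrightarrow> u' i j = 0"
    and agree: "\<And>i j. i + j < m + n \<Longrightarrow> u i j = u' i j"
  shows "grad_inner_jet u u m n = grad_inner_jet u' u' m n"
proof -
  have prod: "u i j * u k l = u' i j * u' k l" if "i + j + (k + l) = m + n + 2" for i j k l
  proof (cases "i + j < 3 \<or> k + l < 3")
    case True
    then show ?thesis using u u' by auto
  next
    case False
    then show ?thesis using that agree by simp
  qed
  have "u (Suc i) j * u (Suc (m - i)) (n - j) = u' (Suc i) j * u' (Suc (m - i)) (n - j)"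
    "u i (Suc j) * u (m - i) (Suc (n - j)) = u' i (Suc j) * u' (m - i) (Suc (n - j))"
    if "i \<le> m" "j \<le> n" for i j
    using prod[of "Suc i" j "Suc (m - i)" "n - j"] prod[of i "Suc j" "m - i" "Suc (n - j)"] that by auto
  then show ?thesis
    unfolding grad_inner_jet_def jet_mult_def by (intro arg_cong2[where f = "(+)"] sum.cong refl) auto
qed

lemma grad_inner_jet_low:
  assumes "\<And>i j. i + j < 3 \<Longrightarrow> u i j = 0" and "m + n \<le> 2"
  shows "grad_inner_jet u u m n = 0"
  using grad_inner_jet_cong_low_orders[of u "\<lambda>_ _. 0" m n] assms
  by (simp add: grad_inner_jet_def jet_mult_def)

definition quad_jet :: "real \<Rightarrow> real \<Rightarrow> nat \<Rightarrow> nat \<Rightarrow> real" where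
  "quad_jet a b m n = (if m = 2 \<and> n = 0 then a else if m = 0 \<and> n = 2 then b else 0)"

lemma grad_inner_jet_quad_jet: "grad_inner_jet (quad_jet a b) v m n = (real m * a + real n * b) * v m n"
proof -
  have "(\<lambda>i j. quad_jet a b (Suc i) j) = (\<lambda>i j. if i = 1 \<and> j = 0 then a else 0)"
    "(\<lambda>i j. quad_jet a b i (Suc j)) = (\<lambda>i j. if i = 0 \<and> j = 1 then b else 0)"
    by (auto simp: fun_eq_iff quad_jet_def)
  then show ?thesis
    by (cases m; cases n) (simp_all add: grad_inner_jet_def jet_mult_single algebra_simps)
qed

primrec higher_jet_upto :: "real \<Rightarrow> real \<Rightarrow> (nat \<Rightarrow> nat \<Rightarrow> real) \<Rightarrow> nat \<Rightarrow> nat \<Rightarrow> nat \<Rightarrow> real" where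
  "higher_jet_upto a b H 0 = (\<lambda>m n. 0)"
| "higher_jet_upto a b H (Suc k) = (\<lambda>m n.
    if m + n = Suc k \<and> 3 \<le> m + n
    then (H m n - grad_inner_jet (higher_jet_upto a b H k) (higher_jet_upto a b H k) m n) /
      (2 * (real m * a + real n * b))
    else higher_jet_upto a b H k m n)"

definition higher_jet :: "real \<Rightarrow> real \<Rightarrow> (nat \<Rightarrow> nat \<Rightarrow> real) \<Rightarrow> nat \<Rightarrow> nat \<Rightarrow> real" where
  "higher_jet a b H m n = higher_jet_upto a b H (m + n) m n"

lemma higher_jet_upto_eq: "m + n \<le> k \<Longrightarrow> higher_jet_upto a b H k m n = higher_jet a b H m n"
  by (induction k) (auto simp: higher_jet_def le_Suc_eq)

lemma higher_jet_upto_low: "m + n < 3 \<Longrightarrow> higher_jet_upto a b H k m n = 0"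
  by (induction k) auto

lemma higher_jet_low: "m + n < 3 \<Longrightarrow> higher_jet a b H m n = 0"
  by (simp add: higher_jet_def higher_jet_upto_low)

lemma higher_jet_rec:
  assumes "a > 0" "b > 0" "3 \<le> m + n"
  shows "2 * (real m * a + real n * b) * higher_jet a b H m n +
    grad_inner_jet (higher_jet a b H) (higher_jet a b H) m n = H m n"
proof -
  obtain k where k: "m + n = Suc k" using assms(3) by (cases "m + n") auto
  have "grad_inner_jet (higher_jet_upto a b H k) (higher_jet_upto a b H k) m n =
      grad_inner_jet (higher_jet a b H) (higher_jet a b H) m n"
    using k
    by (intro grad_inner_jet_cong_low_orders higher_jet_upto_low higher_jet_low higher_jet_upto_eq) auto
  moreover have "0 < real m * a + real n * b"
    using k assms(1,2) by (cases m) (auto intro: add_pos_nonneg)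
  ultimately show ?thesis using assms(3) k by (simp add: higher_jet_def field_simps)
qed

lemma eikonal_jet_solvable:
  fixes a b :: real and H :: "nat \<Rightarrow> nat \<Rightarrow> real"
  assumes a: "a > 0" and b: "b > 0"
    and H: "H 0 0 = 0" "H 1 0 = 0" "H 0 1 = 0" "H 2 0 = 2 * a\<^sup>2" "H 1 1 = 0" "H 0 2 = 2 * b\<^sup>2"
  shows "\<exists>c. \<forall>m n. grad_inner_jet c c m n = H m n"
proof (intro exI allI)
  fix m n
  let ?w = "higher_jet a b H" and ?q = "quad_jet a b"
  have "grad_inner_jet (\<lambda>i j. ?q i j + ?w i j) (\<lambda>i j. ?q i j + ?w i j) m n =
      (real m * a + real n * b) * (?q m n + 2 * ?w m n) + grad_inner_jet ?w ?w m n"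
    by (simp add: grad_inner_jet_add_add grad_inner_jet_commute[of ?w ?q m n] grad_inner_jet_quad_jet
        algebra_simps)
  also have "\<dots> = H m n"
  proof (cases "m + n \<le> 2")
    case True
    then have "(m, n) \<in> {(0, 0), (1, 0), (0, 1), (2, 0), (1, 1), (0, 2)}"
      by (cases m; cases n) (auto simp: numeral_2_eq_2)
    then show ?thesis using True H
      by (auto simp: higher_jet_low grad_inner_jet_low quad_jet_def power2_eq_square)
  next
    case False
    then show ?thesis using higher_jet_rec[OF a b, of m n H] by (simp add: quad_jet_def algebra_simps)
  qed
  finally show "grad_inner_jet (\<lambda>i j. ?q i j + ?w i j) (\<lambda>i j. ?q i j + ?w i j) m n = H m n" .
qed

theorem corollary4p3:
  fixes h :: "real \<times> real \<Rightarrow> real" and U :: "(real \<times> real) set" and a b :: real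
  assumes "open U" and "(0, 0) \<in> U" and "smooth_on U h"
    and "a > 0" and "b > 0"
    and "\<forall>p q. p \<in> \<rat> \<and> q \<in> \<rat> \<and> p * a + q * b = 0 \<longrightarrow> p = 0 \<and> q = 0"
    and "h (0, 0) = 0"
    and "iter_pd [True] h (0, 0) = 0" and "iter_pd [False] h (0, 0) = 0"
    and "iter_pd [True, True] h (0, 0) = 2 * a\<^sup>2"
    and "iter_pd [True, False] h (0, 0) = 0"
    and "iter_pd [False, False] h (0, 0) = 2 * b\<^sup>2"
  shows "\<exists>V z. open V \<and> (0, 0) \<in> V \<and> smooth_on V z \<and>
           vanishes_to_infinite_order_at (\<lambda>p. (pdx z p)\<^sup>2 + (pdy z p)\<^sup>2 - h p) (0, 0)"
proof -
  obtain c where c: "\<And>m n. grad_inner_jet c c m n = jet h (0, 0) m n"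
    using eikonal_jet_solvable[of a b "jet h (0, 0)"] assms(4-5,7-12)
    by (auto simp: jet_def numeral_2_eq_2)
  obtain z where "smooth_on UNIV z" and jet_z: "jet z (0, 0) = c"
    using borel_lemma by blast
  then have z: "smooth_on U z" using smooth_on_subset assms(1) by blast
  have "smooth_on U (\<lambda>p. (pdx z p)\<^sup>2 + (pdy z p)\<^sup>2)"
    unfolding power2_eq_square by (intro smooth_on_add smooth_on_mult smooth_on_pdx smooth_on_pdy z)
  then have "iter_pd ds (\<lambda>p. (pdx z p)\<^sup>2 + (pdy z p)\<^sup>2 - h p) (0, 0) = 0" for ds
    using iter_pd_diff[OF _ assms(3,2)] iter_pd_grad_square[OF z assms(2)]
      iter_pd_eq_jet[OF assms(3,2)] c jet_z by simp
  then show ?thesis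
    using assms(1,2) z unfolding vanishes_to_infinite_order_at_def by blast
qed

end
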